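(* Let $r\ge 1$ be an integer, let $A$ be a finite alphabet, and let $f_0,\ldots,f_{r-1}$ be morphisms of $A^*$. If an infinite word $\mathbf{w}$ over $A$ is an alternating fixed point of $(f_0,\ldots,f_{r-1})$, then $\mathbf{w}$ is a fixed point of some $r$-block substitution $g:A^r\to A^*$.
   Context: An infinite word $\mathbf{w}=w_0w_1w_2\cdots$ over $A$ is an alternating fixed point of $(f_0,\ldots,f_{r-1})$ if $\mathbf{w}=f_0(w_0)f_1(w_1)\cdots f_{r-1}(w_{r-1})f_0(w_r)\cdots f_{i\bmod r}(w_i)\cdots$. An $r$-block substitution is a map $g:A^r\to A^*$; it acts on a word $w_0\cdots w_{rn-1}$ by $g(w_0\cdots w_{r-1})g(w_r\cdots w_{2r-1})\cdots g(w_{r(n-1)}\cdots w_{rn-1})$ (a suffix of length less than $r$ is ignored). An infinite word $\mathbf{w}=w_0w_1\cdots$ is a fixed point of $g$ if $\mathbf{w}=g(w_0\cdots w_{r-1})g(w_r\cdots w_{2r-1})\cdots$. *)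

theory Defs
  imports Main
begin

text \<open>The infinite word w equals the infinite concatenation u 0 u 1 u 2 ... of the
  finite words u i: every finite concatenation u 0 ... u (n-1) is a prefix of w,
  and these prefixes have unbounded length (so the concatenation is infinite).\<close>
definition inf_concat_eq :: "(nat \<Rightarrow> 'a) \<Rightarrow> (nat \<Rightarrow> 'a list) \<Rightarrow> bool" where
  "inf_concat_eq w u \<longleftrightarrow>
     (\<forall>n. \<forall>i < length (concat (map u [0..<n])). w i = concat (map u [0..<n]) ! i) \<and>
     (\<forall>m. \<exists>n. m \<le> length (concat (map u [0..<n])))"

text \<open>Alternating fixed point of (f 0, ..., f (r-1)); a morphism of A* is given by
  its images of letters.\<close>
definition alternating_fixed_point :: "nat \<Rightarrow> (nat \<Rightarrow> 'a \<Rightarrow> 'a list) \<Rightarrow> (nat \<Rightarrow> 'a) \<Rightarrow> bool" where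
  "alternating_fixed_point r f w \<longleftrightarrow> inf_concat_eq w (\<lambda>i. f (i mod r) (w i))"

definition block_fixed_point :: "nat \<Rightarrow> ('a list \<Rightarrow> 'a list) \<Rightarrow> (nat \<Rightarrow> 'a) \<Rightarrow> bool" where
  "block_fixed_point r g w \<longleftrightarrow> inf_concat_eq w (\<lambda>i. g (map w [r * i..<r * i + r]))"

end

theory Submission
  imports Defs
begin

(* Cut the alternating fixed point into consecutive blocks of r letters. The letter at
   position j of the block starting at r i sits at a position congruent to j mod r, so it
   is mapped by f j; hence the r-block substitution applying f j to the j-th letter of its
   argument produces, block by block, exactly the same concatenation, and the prefixes
   after n blocks are the prefixes after r n letters, which are still unbounded. *)

definition block_of_morphisms :: "nat \<Rightarrow> (nat \<Rightarrow> 'a \<Rightarrow> 'a list) \<Rightarrow> 'a list \<Rightarrow> 'a list" where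
  "block_of_morphisms r f xs = concat (map (\<lambda>j. f j (xs ! j)) [0..<r])"

lemma set_block_of_morphisms_subset:
  assumes "\<And>k a. k < r \<Longrightarrow> a \<in> A \<Longrightarrow> set (f k a) \<subseteq> A"
    and "set xs \<subseteq> A" and "length xs = r"
  shows "set (block_of_morphisms r f xs) \<subseteq> A"
proof
  fix x assume "x \<in> set (block_of_morphisms r f xs)"
  then obtain j where "j < r" and "x \<in> set (f j (xs ! j))"
    by (auto simp: block_of_morphisms_def)
  moreover have "xs ! j \<in> A"
    using assms(2,3) \<open>j < r\<close> by auto
  ultimately show "x \<in> A"
    using assms(1) by blast
qed

lemma block_of_morphisms_window:
  "block_of_morphisms r f (map w [r * i..<r * i + r])
     = concat (map (\<lambda>k. f (k mod r) (w k)) [r * i..<r * i + r])"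
proof -
  have "map (\<lambda>j. f j (map w [r * i..<r * i + r] ! j)) [0..<r]
      = map (\<lambda>k. f (k mod r) (w k)) [r * i..<r * i + r]"
    by (rule nth_equalityI) simp_all
  then show ?thesis
    by (simp add: block_of_morphisms_def)
qed

lemma concat_block_of_morphisms:
  "concat (map (\<lambda>i. block_of_morphisms r f (map w [r * i..<r * i + r])) [0..<n])
     = concat (map (\<lambda>k. f (k mod r) (w k)) [0..<r * n])"
proof (induction n)
  case 0
  then show ?case by simp
next
  case (Suc n)
  have "[0..<r * Suc n] = [0..<r * n] @ [r * n..<r * n + r]"
    using upt_add_eq_append[of 0 "r * n" r] by (simp add: add.commute)
  then show ?case
    using Suc by (simp add: block_of_morphisms_window)
qed

lemma length_concat_map_upt_mono:
  assumes "m \<le> n"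
  shows "length (concat (map u [0..<m])) \<le> length (concat (map u [0..<n]))"
proof -
  obtain k where "n = m + k"
    using assms le_Suc_ex by blast
  then show ?thesis
    using upt_add_eq_append[of 0 m k] by simp
qed

lemma inf_concat_eq_regroup:
  assumes "inf_concat_eq w u" and "r \<ge> 1"
    and "\<And>n. concat (map v [0..<n]) = concat (map u [0..<r * n])"
  shows "inf_concat_eq w v"
  unfolding inf_concat_eq_def assms(3)
proof (intro conjI)
  show "\<forall>n. \<forall>i < length (concat (map u [0..<r * n])). w i = concat (map u [0..<r * n]) ! i"
    using assms(1) by (simp add: inf_concat_eq_def)
  show "\<forall>m. \<exists>n. m \<le> length (concat (map u [0..<r * n]))"
  proof
    fix m
    obtain n where "m \<le> length (concat (map u [0..<n]))"
      using assms(1) unfolding inf_concat_eq_def by blast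
    also have "\<dots> \<le> length (concat (map u [0..<r * n]))"
      using assms(2) by (intro length_concat_map_upt_mono) simp
    finally show "\<exists>n. m \<le> length (concat (map u [0..<r * n]))" by blast
  qed
qed

theorem mainTheorem1:
  fixes r :: nat and A :: "'a set" and f :: "nat \<Rightarrow> 'a \<Rightarrow> 'a list" and w :: "nat \<Rightarrow> 'a"
  assumes "r \<ge> 1"
    and "finite A"
    and "\<And>k a. k < r \<Longrightarrow> a \<in> A \<Longrightarrow> set (f k a) \<subseteq> A"
    and "\<And>i. w i \<in> A"
    and "alternating_fixed_point r f w"
  shows "\<exists>g :: 'a list \<Rightarrow> 'a list.
           (\<forall>xs. set xs \<subseteq> A \<and> length xs = r \<longrightarrow> set (g xs) \<subseteq> A) \<and>
           block_fixed_point r g w"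
proof -
  have "\<forall>xs. set xs \<subseteq> A \<and> length xs = r \<longrightarrow> set (block_of_morphisms r f xs) \<subseteq> A"
    using set_block_of_morphisms_subset[OF assms(3)] by simp
  moreover have "block_fixed_point r (block_of_morphisms r f) w"
    using assms(5) unfolding block_fixed_point_def alternating_fixed_point_def
    by (rule inf_concat_eq_regroup[OF _ assms(1) concat_block_of_morphisms])
  ultimately show ?thesis
    by blast
qed

end
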